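(* Let $d\ge1$ and let $G_1=(V_1,E_1)$ and $G_2=(V_2,E_2)$ be two graphs with $G_1\cap G_2\cong K_2$ and $E_1\cap E_2=\{e\}$, such that $e$ is not a coloop in either $\mathcal{R}_d(G_1)$ or $\mathcal{R}_d(G_2)$. If $G$ is the graphical parallel connection of $G_1$ and $G_2$ along $e$, then $\mathcal{R}_d(G)=P(\mathcal{R}_d(G_1),\mathcal{R}_d(G_2))$. Moreover, if $G'$ is the graphical 2-sum of $G_1$ and $G_2$ along $e$, then $\mathcal{R}_d(G')=\mathcal{R}_d(G_1)\oplus_2\mathcal{R}_d(G_2)$.
   Context: For a graph $G=(V,E)$ and a generic $p:V\to\mathbb{R}^d$ (coordinates algebraically independent over $\mathbb{Q}$), the rigidity matrix $R(G,p)$ has a row for each $uv\in E$ with $p(u)-p(v)$ in the $d$ columns of $u$, $p(v)-p(u)$ in those of $v$, zeros elsewhere. $\mathcal{R}_d(G)$ is its row matroid on $E$. A coloop of a matroid is an element contained in no circuit. Graphical operations: for graphs $G_1,G_2$ with $G_1\cap G_2\cong K_2$ and $E_1\cap E_2=\{e\}$, the graphical parallel connection along $e$ is $G_1\cup G_2$ and the graphical 2-sum along $e$ is $(G_1\cup G_2)-e$. Matroid operations: for matroids $\mathcal{M}_1,\mathcal{M}_2$ on $E_1,E_2$ with $E_1\cap E_2=\{e\}$, $e$ neither a loop nor a coloop of either, the parallel connection $P(\mathcal{M}_1,\mathcal{M}_2)$ is the matroid on $E_1\cup E_2$ whose circuits are the circuits of $\mathcal{M}_1$, the circuits of $\mathcal{M}_2$,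 and the sets $(C_1\cup C_2)-e$ where $C_i$ is a circuit of $\mathcal{M}_i$ containing $e$ for $i=1,2$. The 2-sum $\mathcal{M}_1\oplus_2\mathcal{M}_2$ is the matroid on $(E_1\cup E_2)-e$ whose circuits are the circuits of $\mathcal{M}_1$ or $\mathcal{M}_2$ not containing $e$, together with the sets $(C_1\cup C_2)-e$ where $C_i$ is a circuit of $\mathcal{M}_i$ containing $e$ for $i=1,2$. *)

theory Defs
  imports Complex_Main
begin

definition simple_graph :: "'v set \<Rightarrow> 'v set set \<Rightarrow> bool" where
  "simple_graph V E \<longleftrightarrow> finite V \<and> (\<forall>x\<in>E. x \<subseteq> V \<and> card x = 2)"

text \<open>A polynomial is given by a finite set M of (distinct) monomials (exponent functions
  supported in X) and rational coefficients c.\<close>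
definition alg_indep_rat :: "'a set \<Rightarrow> ('a \<Rightarrow> real) \<Rightarrow> bool" where
  "alg_indep_rat X x \<longleftrightarrow>
     (\<forall>(M :: ('a \<Rightarrow> nat) set) (c :: ('a \<Rightarrow> nat) \<Rightarrow> rat).
        finite M \<and> (\<forall>m\<in>M. \<forall>a. m a \<noteq> 0 \<longrightarrow> a \<in> X) \<and>
        (\<Sum>m\<in>M. of_rat (c m) * (\<Prod>a\<in>X. x a ^ m a)) = 0
        \<longrightarrow> (\<forall>m\<in>M. c m = 0))"

definition generic :: "nat \<Rightarrow> 'v set \<Rightarrow> ('v \<Rightarrow> nat \<Rightarrow> real) \<Rightarrow> bool" where
  "generic d V p \<longleftrightarrow> alg_indep_rat (V \<times> {..<d}) (\<lambda>(v, i). p v i)"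

text \<open>Row of the rigidity matrix R(G,p) for the edge e = {u,v}; the columns are
  indexed by pairs (w,i), w a vertex, i < d. Entry in the columns of u is p(u) - p(v).\<close>
definition rig_row :: "nat \<Rightarrow> ('v \<Rightarrow> nat \<Rightarrow> real) \<Rightarrow> 'v set \<Rightarrow> 'v \<times> nat \<Rightarrow> real" where
  "rig_row d p e = (\<lambda>(w, i). if w \<in> e \<and> i < d
                              then p w i - p (THE u. u \<in> e \<and> u \<noteq> w) i else 0)"

definition rig_indep :: "nat \<Rightarrow> ('v \<Rightarrow> nat \<Rightarrow> real) \<Rightarrow> 'v set set \<Rightarrow> bool" where
  "rig_indep d p F \<longleftrightarrow>
     (\<forall>c :: 'v set \<Rightarrow> real.
        (\<forall>col. (\<Sum>f\<in>F. c f * rig_row d p f col) = 0) \<longrightarrow> (\<forall>f\<in>F. c f = 0))"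

definition rig_circuits :: "nat \<Rightarrow> ('v \<Rightarrow> nat \<Rightarrow> real) \<Rightarrow> 'v set set \<Rightarrow> 'v set set set" where
  "rig_circuits d p E =
     {C. C \<subseteq> E \<and> \<not> rig_indep d p C \<and> (\<forall>D. D \<subset> C \<longrightarrow> rig_indep d p D)}"

definition is_coloop :: "'e set set \<Rightarrow> 'e \<Rightarrow> bool" where
  "is_coloop \<C> x \<longleftrightarrow> (\<forall>C\<in>\<C>. x \<notin> C)"

definition par_conn_circuits :: "'e set set \<Rightarrow> 'e set set \<Rightarrow> 'e \<Rightarrow> 'e set set" where
  "par_conn_circuits \<C>1 \<C>2 x =
     \<C>1 \<union> \<C>2 \<union> {(C1 \<union> C2) - {x} | C1 C2. C1 \<in> \<C>1 \<and> x \<in> C1 \<and> C2 \<in> \<C>2 \<and> x \<in> C2}"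

definition two_sum_circuits :: "'e set set \<Rightarrow> 'e set set \<Rightarrow> 'e \<Rightarrow> 'e set set" where
  "two_sum_circuits \<C>1 \<C>2 x =
     {C \<in> \<C>1. x \<notin> C} \<union> {C \<in> \<C>2. x \<notin> C} \<union>
     {(C1 \<union> C2) - {x} | C1 C2. C1 \<in> \<C>1 \<and> x \<in> C1 \<and> C2 \<in> \<C>2 \<and> x \<in> C2}"

end

theory Submission
  imports Defs
begin

(* Write r_f for the row of the edge f. Any vector lying both in the span of the rows of E1 and
   in the span of the rows of E2 has nonzero entries only in the columns of the two common
   vertices a, b; being a combination of rows it annihilates the trivial infinitesimal motions
   (translations and rotations), and these force it to be a multiple of r_e, since
   p a - p b is nonzero by genericity.

   For any finite family of vectors whose restrictions to E1 and E2 have spans meeting only in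
   the line of r_e, the circuits of E1 \<union> E2 are those of the parallel connection: the relation
   of a circuit meeting both sides splits into two parts that are opposite multiples of r_e, and
   each part completes with e to a circuit; conversely for circuits C1, C2 through e, solving both
   relations for r_e shows (C1 \<union> C2) - e dependent, and any relation on a proper subset splits in
   the same way and forces it to be all of (C1 \<union> C2) - e. Deleting e turns the parallel
   connection into the 2-sum. *)

section \<open>Circuits of a finite family of vectors\<close>

definition indep_rows :: "('e \<Rightarrow> 'c \<Rightarrow> real) \<Rightarrow> 'e set \<Rightarrow> bool" where
  "indep_rows r F \<longleftrightarrow>
     (\<forall>c :: 'e \<Rightarrow> real. (\<forall>col. (\<Sum>f\<in>F. c f * r f col) = 0) \<longrightarrow> (\<forall>f\<in>F. c f = 0))"

definition row_circuit :: "('e \<Rightarrow> 'c \<Rightarrow> real) \<Rightarrow> 'e set \<Rightarrow> bool" where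
  "row_circuit r C \<longleftrightarrow> \<not> indep_rows r C \<and> (\<forall>D. D \<subset> C \<longrightarrow> indep_rows r D)"

definition row_circuits :: "('e \<Rightarrow> 'c \<Rightarrow> real) \<Rightarrow> 'e set \<Rightarrow> 'e set set" where
  "row_circuits r E = {C. C \<subseteq> E \<and> row_circuit r C}"

lemma rig_circuits_eq_row_circuits: "rig_circuits d p E = row_circuits (rig_row d p) E"
  unfolding rig_circuits_def row_circuits_def row_circuit_def rig_indep_def indep_rows_def
  by blast

lemma row_circuits_Diff_singleton: "row_circuits r (E - {x}) = {C \<in> row_circuits r E. x \<notin> C}"
  by (auto simp: row_circuits_def)

definition supp :: "('e \<Rightarrow> real) \<Rightarrow> 'e set" where
  "supp c = {f. c f \<noteq> 0}"

definition lincomb :: "('e \<Rightarrow> 'c \<Rightarrow> real) \<Rightarrow> 'e set \<Rightarrow> ('e \<Rightarrow> real) \<Rightarrow> 'c \<Rightarrow> real" where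
  "lincomb r U c col = (\<Sum>f\<in>U. c f * r f col)"

lemma lincomb_add: "lincomb r U (\<lambda>f. a f + b f) col = lincomb r U a col + lincomb r U b col"
  by (simp add: lincomb_def distrib_right sum.distrib)

lemma lincomb_diff: "lincomb r U (\<lambda>f. a f - b f) col = lincomb r U a col - lincomb r U b col"
  by (simp add: lincomb_def left_diff_distrib sum_subtractf)

lemma lincomb_scale: "lincomb r U (\<lambda>f. k * a f) col = k * lincomb r U a col"
  by (simp add: lincomb_def sum_distrib_left mult.assoc)

lemma lincomb_uminus: "lincomb r U (\<lambda>f. - a f) col = - lincomb r U a col"
  by (simp add: lincomb_def sum_negf)

lemma lincomb_delta: "finite U \<Longrightarrow> e \<in> U \<Longrightarrow> lincomb r U (\<lambda>f. if f = e then 1 else 0) col = r e col"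
  by (simp add: lincomb_def if_distrib[where f="\<lambda>x. x * _"] cong: if_cong)

lemma lincomb_supp_subset:
  assumes "finite U" "supp c \<subseteq> X" "X \<subseteq> U"
  shows "lincomb r U c col = (\<Sum>f\<in>X. c f * r f col)"
  unfolding lincomb_def
  by (rule sum.mono_neutral_right) (use assms in \<open>auto simp: supp_def\<close>)

lemma lincomb_eq_0_if_rows_vanish:
  assumes "\<And>f. f \<in> supp c \<Longrightarrow> r f col = 0"
  shows "lincomb r U c col = 0"
  unfolding lincomb_def by (rule sum.neutral) (use assms in \<open>force simp: supp_def\<close>)

lemma not_indep_rows_iff:
  assumes "finite U" "X \<subseteq> U"
  shows "\<not> indep_rows r X \<longleftrightarrow>
           (\<exists>c. supp c \<subseteq> X \<and> supp c \<noteq> {} \<and> (\<forall>col. lincomb r U c col = 0))"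
proof
  assume "\<not> indep_rows r X"
  then obtain c f0 where c: "\<forall>col. (\<Sum>f\<in>X. c f * r f col) = 0" and "f0 \<in> X" "c f0 \<noteq> 0"
    unfolding indep_rows_def by blast
  define c' where "c' = (\<lambda>f. if f \<in> X then c f else 0)"
  have "supp c' \<subseteq> X" "f0 \<in> supp c'"
    using \<open>f0 \<in> X\<close> \<open>c f0 \<noteq> 0\<close> by (auto simp: supp_def c'_def)
  moreover have "lincomb r U c' col = 0" for col
  proof -
    have "lincomb r U c' col = (\<Sum>f\<in>X. c' f * r f col)"
      by (rule lincomb_supp_subset[OF assms(1) \<open>supp c' \<subseteq> X\<close> assms(2)])
    also have "\<dots> = (\<Sum>f\<in>X. c f * r f col)"
      by (simp add: c'_def)
    finally show ?thesis using c by simp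
  qed
  ultimately show "\<exists>c. supp c \<subseteq> X \<and> supp c \<noteq> {} \<and> (\<forall>col. lincomb r U c col = 0)"
    by blast
next
  assume "\<exists>c. supp c \<subseteq> X \<and> supp c \<noteq> {} \<and> (\<forall>col. lincomb r U c col = 0)"
  then obtain c where "supp c \<subseteq> X" "supp c \<noteq> {}" "\<forall>col. lincomb r U c col = 0"
    by blast
  then have "(\<Sum>f\<in>X. c f * r f col) = 0" for col
    using lincomb_supp_subset[OF assms(1) _ assms(2), of c r col] by simp
  moreover obtain f where "f \<in> supp c"
    using \<open>supp c \<noteq> {}\<close> by blast
  ultimately show "\<not> indep_rows r X"
    using \<open>supp c \<subseteq> X\<close> unfolding indep_rows_def supp_def by blast
qed

lemma row_circuitI:
  assumes U: "finite U" "X \<subseteq> U"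
    and dep: "supp c = X" "X \<noteq> {}" "\<forall>col. lincomb r U c col = 0"
    and minimal: "\<And>g. supp g \<subseteq> X \<Longrightarrow> supp g \<noteq> {} \<Longrightarrow> \<forall>col. lincomb r U g col = 0 \<Longrightarrow>
                        X \<subseteq> supp g"
  shows "row_circuit r X"
proof -
  have "\<not> indep_rows r X"
    using not_indep_rows_iff[OF U, where r = r] dep by blast
  moreover have "indep_rows r D" if D: "D \<subset> X" for D
  proof (rule ccontr)
    assume "\<not> indep_rows r D"
    then obtain g where "supp g \<subseteq> D" "supp g \<noteq> {}" "\<forall>col. lincomb r U g col = 0"
      using not_indep_rows_iff[OF U(1), of D r] D U(2) by auto
    then show False
      using minimal[of g] D by blast
  qed
  ultimately show ?thesis
    by (simp add: row_circuit_def)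
qed

lemma row_circuit_relation_supp_eq:
  assumes "finite U" "row_circuit r C" "C \<subseteq> U"
    and "supp c \<subseteq> C" "supp c \<noteq> {}" "\<forall>col. lincomb r U c col = 0"
  shows "supp c = C"
proof (rule ccontr)
  assume "supp c \<noteq> C"
  then have "indep_rows r (supp c)"
    using assms(2,4) by (auto simp: row_circuit_def)
  then show False
    using not_indep_rows_iff[OF assms(1), of "supp c"] assms(3-6) by blast
qed

lemma supp_diff_disjoint:
  "supp x \<inter> supp y = {} \<Longrightarrow> supp (\<lambda>f. x f - y f) = supp x \<union> supp y"
  unfolding supp_def by force

lemma row_circuit_lincomb_eq_supp_Un:
  assumes "finite U" "row_circuit r C" "C \<subseteq> U"
    and "supp x \<subseteq> C" "supp y \<subseteq> C" "supp x \<inter> supp y = {}" "supp x \<noteq> {}"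
    and "\<forall>col. lincomb r U x col = lincomb r U y col"
  shows "supp x \<union> supp y = C"
proof -
  have rel: "\<forall>col. lincomb r U (\<lambda>f. x f - y f) col = 0"
    using assms(8) by (simp add: lincomb_diff)
  have supp_xy: "supp (\<lambda>f. x f - y f) = supp x \<union> supp y"
    by (rule supp_diff_disjoint[OF assms(6)])
  then have "supp (\<lambda>f. x f - y f) \<subseteq> C" "supp (\<lambda>f. x f - y f) \<noteq> {}"
    using assms(4,5,7) by auto
  then show ?thesis
    using row_circuit_relation_supp_eq[OF assms(1-3) _ _ rel] supp_xy by simp
qed

lemma row_circuit_relation:
  assumes "finite U" "row_circuit r C" "C \<subseteq> U"
  obtains c where "supp c = C" "\<forall>col. lincomb r U c col = 0"
proof -
  obtain c where "supp c \<subseteq> C" "supp c \<noteq> {}" "\<forall>col. lincomb r U c col = 0"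
    using not_indep_rows_iff[OF assms(1,3), where r=r] assms(2) by (auto simp: row_circuit_def)
  then show ?thesis
    using row_circuit_relation_supp_eq[OF assms] that by blast
qed

lemma row_circuit_relation_through:
  assumes "finite U" "row_circuit r C" "C \<subseteq> U" "e \<in> C"
  obtains a where "supp a = C - {e}" "\<forall>col. lincomb r U a col = r e col"
proof -
  obtain c where c: "supp c = C" "\<forall>col. lincomb r U c col = 0"
    using row_circuit_relation[OF assms(1-3)] .
  then have "c e \<noteq> 0" using assms(4) by (auto simp: supp_def)
  define a where "a = (\<lambda>f. (- 1 / c e) * c f + (if f = e then 1 else 0))"
  have "supp a = C - {e}"
    using c(1) \<open>c e \<noteq> 0\<close> by (auto simp: a_def supp_def)
  moreover have "lincomb r U a col = r e col" for col
    unfolding a_def lincomb_add lincomb_scale lincomb_delta[OF assms(1) subsetD[OF assms(3,4)]]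
    using c(2) by simp
  ultimately show ?thesis using that by blast
qed

lemma row_circuit_lincomb_eq_multiple:
  assumes "finite U" "row_circuit r C" "C \<subseteq> U" "e \<in> C"
    and "supp a \<subseteq> C - {e}" "\<forall>col. lincomb r U a col = l * r e col"
  shows "supp a = (if l = 0 then {} else C - {e})"
proof -
  define h where "h = (\<lambda>f. a f - l * (if f = e then 1 else 0))"
  have "lincomb r U h col = 0" for col
    unfolding h_def lincomb_diff lincomb_scale lincomb_delta[OF assms(1) subsetD[OF assms(3,4)]]
    using assms(6) by simp
  moreover have "supp h \<subseteq> C"
    using assms(4,5) by (auto simp: h_def supp_def)
  ultimately have supp_h: "supp h \<noteq> {} \<Longrightarrow> supp h = C"
    using row_circuit_relation_supp_eq[OF assms(1-3)] by blast
  show ?thesis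
  proof (cases "l = 0")
    case True
    then have "supp h = supp a" by (simp add: h_def)
    then show ?thesis using supp_h True assms(4,5) by auto
  next
    case False
    then have "supp h = insert e (supp a)"
      using assms(5) by (auto simp: h_def supp_def)
    then show ?thesis using supp_h False assms(5) by auto
  qed
qed

lemma row_circuit_insert_split_part:
  assumes U: "finite U" and C: "row_circuit r C" "C \<subseteq> U" and e: "e \<in> U" "e \<notin> C"
    and sab: "supp a \<subseteq> C" "supp b \<subseteq> C" "supp a \<inter> supp b = {}" "supp b \<noteq> {}"
    and la: "\<forall>col. lincomb r U a col = l * r e col"
    and lb: "\<forall>col. lincomb r U b col = - l * r e col"
    and "l \<noteq> 0"
  shows "row_circuit r (insert e (supp a))"
proof (rule row_circuitI[OF U])
  have ab_e: "a e = 0" "b e = 0"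
    using sab e(2) by (auto simp: supp_def)
  show "insert e (supp a) \<subseteq> U"
    using sab(1) C(2) e(1) by blast
  show "supp (\<lambda>f. a f - l * (if f = e then 1 else 0)) = insert e (supp a)"
    using ab_e \<open>l \<noteq> 0\<close> by (auto simp: supp_def)
  show "insert e (supp a) \<noteq> {}"
    by simp
  show "\<forall>col. lincomb r U (\<lambda>f. a f - l * (if f = e then 1 else 0)) col = 0"
    unfolding lincomb_diff lincomb_scale lincomb_delta[OF U e(1)] using la by simp
  fix g assume g: "supp g \<subseteq> insert e (supp a)" "supp g \<noteq> {}" "\<forall>col. lincomb r U g col = 0"
  have "g e \<noteq> 0"
  proof
    assume "g e = 0"
    then have "supp g \<subseteq> supp a"
      using g(1) by (auto simp: supp_def)
    then have "supp g = C"
      using row_circuit_relation_supp_eq[OF U C _ g(2,3)] sab(1) by blast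
    then show False
      using \<open>supp g \<subseteq> supp a\<close> sab(2-4) by blast
  qed
  \<comment> \<open>after rescaling, g without its e-coordinate combines to - l r_e, just like b\<close>
  define g' where "g' = (\<lambda>f. g f - g e * (if f = e then 1 else 0))"
  have "supp g' = supp g - {e}"
    by (auto simp: g'_def supp_def)
  then have supp_g': "supp (\<lambda>f. (l / g e) * g' f) = supp g - {e}"
    using \<open>l \<noteq> 0\<close> \<open>g e \<noteq> 0\<close> by (auto simp: supp_def)
  have lin: "\<forall>col. lincomb r U b col = lincomb r U (\<lambda>f. (l / g e) * g' f) col"
    unfolding lincomb_scale g'_def lincomb_diff lincomb_delta[OF U e(1)]
    using g(3) lb \<open>g e \<noteq> 0\<close> by simp
  have "supp g - {e} \<subseteq> supp a"
    using g(1) by blast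
  then have "supp (\<lambda>f. (l / g e) * g' f) \<subseteq> C" "supp b \<inter> supp (\<lambda>f. (l / g e) * g' f) = {}"
    using supp_g' sab(1,3) by auto
  from row_circuit_lincomb_eq_supp_Un[OF U C sab(2) this sab(4) lin]
  have "supp b \<union> (supp g - {e}) = C"
    unfolding supp_g' .
  then have "supp a \<subseteq> supp g"
    using sab(1,3) by blast
  then show "insert e (supp a) \<subseteq> supp g"
    using \<open>g e \<noteq> 0\<close> by (simp add: supp_def)
qed

section \<open>Families whose spans meet in a line\<close>

definition spans_meet_in_line :: "('e \<Rightarrow> 'c \<Rightarrow> real) \<Rightarrow> 'e set \<Rightarrow> 'e set \<Rightarrow> 'e \<Rightarrow> bool" where
  "spans_meet_in_line r E1 E2 e \<longleftrightarrow>
     (\<forall>a b. supp a \<subseteq> E1 \<longrightarrow> supp b \<subseteq> E2 \<longrightarrow>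
        (\<forall>col. lincomb r (E1 \<union> E2) a col = lincomb r (E1 \<union> E2) b col) \<longrightarrow>
        (\<exists>l. \<forall>col. lincomb r (E1 \<union> E2) a col = l * r e col))"

lemma relation_split_along_line:
  assumes "spans_meet_in_line r E1 E2 e"
    and "supp g \<subseteq> E1 \<union> E2" "\<forall>col. lincomb r (E1 \<union> E2) g col = 0"
  obtains l
  where "\<forall>col. lincomb r (E1 \<union> E2) (\<lambda>f. if f \<in> E1 then g f else 0) col = l * r e col"
    and "\<forall>col. lincomb r (E1 \<union> E2) (\<lambda>f. if f \<in> E1 then 0 else g f) col = - l * r e col"
proof -
  define a where "a = (\<lambda>f. if f \<in> E1 then g f else 0)"
  define b where "b = (\<lambda>f. if f \<in> E1 then 0 else g f)"
  have "g = (\<lambda>f. a f + b f)"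
    by (auto simp: a_def b_def)
  then have ab: "lincomb r (E1 \<union> E2) a col = lincomb r (E1 \<union> E2) (\<lambda>f. - b f) col" for col
    using assms(3) lincomb_add[of r "E1 \<union> E2" a b col] by (simp add: lincomb_uminus)
  have "supp a \<subseteq> E1" "supp (\<lambda>f. - b f) \<subseteq> E2"
    using assms(2) by (auto simp: a_def b_def supp_def)
  then obtain l where "\<forall>col. lincomb r (E1 \<union> E2) a col = l * r e col"
    using assms(1) ab unfolding spans_meet_in_line_def by blast
  moreover from this have "\<forall>col. lincomb r (E1 \<union> E2) b col = - l * r e col"
    using ab by (simp add: lincomb_uminus minus_equation_iff)
  ultimately show ?thesis
    using that unfolding a_def b_def by blast
qed

lemma row_circuit_union_decompose:
  assumes fin: "finite (E1 \<union> E2)" and int: "E1 \<inter> E2 = {e}"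
    and meet: "spans_meet_in_line r E1 E2 e"
    and C: "row_circuit r C" "C \<subseteq> E1 \<union> E2" and not_in: "\<not> C \<subseteq> E1" "\<not> C \<subseteq> E2"
  obtains C1 C2 where "C = (C1 \<union> C2) - {e}"
    and "C1 \<in> row_circuits r E1" "e \<in> C1" "C2 \<in> row_circuits r E2" "e \<in> C2"
proof -
  let ?U = "E1 \<union> E2"
  obtain f1 f2 where f1: "f1 \<in> C" "f1 \<in> E1" "f1 \<noteq> e" and f2: "f2 \<in> C" "f2 \<in> E2" "f2 \<notin> E1"
    using not_in C(2) int by blast
  have e: "e \<in> ?U"
    using int by blast
  obtain c where c: "supp c = C" "\<forall>col. lincomb r ?U c col = 0"
    using row_circuit_relation[OF fin C] .
  define a where "a = (\<lambda>f. if f \<in> E1 then c f else 0)"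
  define b where "b = (\<lambda>f. if f \<in> E1 then 0 else c f)"
  obtain l where la: "\<forall>col. lincomb r ?U a col = l * r e col"
    and lb: "\<forall>col. lincomb r ?U b col = - l * r e col"
    using relation_split_along_line[OF meet _ c(2)] c(1) C(2) unfolding a_def b_def by blast
  have sa: "supp a = C \<inter> E1" and sb: "supp b = C - E1"
    using c(1) by (auto simp: a_def b_def supp_def)
  have "e \<notin> C"
  proof
    assume "e \<in> C"
    define h where "h = (\<lambda>f. b f + l * (if f = e then 1 else 0))"
    have "\<forall>col. lincomb r ?U h col = 0"
      unfolding h_def lincomb_add lincomb_scale lincomb_delta[OF fin e] using lb by simp
    moreover have "supp h \<subseteq> C" "f2 \<in> supp h" "f1 \<notin> supp h"
      using sb \<open>e \<in> C\<close> f1 f2 int by (auto simp: h_def supp_def)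
    ultimately show False
      using row_circuit_relation_supp_eq[OF fin C] f1(1) by blast
  qed
  have "l \<noteq> 0"
  proof
    assume "l = 0"
    then have "supp a = C"
      using row_circuit_relation_supp_eq[OF fin C, of a] la sa f1 by auto
    then show False
      using sa f2 by blast
  qed
  have "row_circuit r (insert e (supp a))"
    by (rule row_circuit_insert_split_part[OF fin C e \<open>e \<notin> C\<close> _ _ _ _ la lb \<open>l \<noteq> 0\<close>])
      (use sa sb f2 in auto)
  moreover have "row_circuit r (insert e (supp b))"
    by (rule row_circuit_insert_split_part[OF fin C e \<open>e \<notin> C\<close>, of b a "- l"])
      (use sa sb f1 la lb \<open>l \<noteq> 0\<close> in auto)
  moreover have "C = (insert e (supp a) \<union> insert e (supp b)) - {e}"
    using sa sb \<open>e \<notin> C\<close> by auto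
  moreover have "insert e (supp a) \<subseteq> E1" "insert e (supp b) \<subseteq> E2"
    using sa sb C(2) int by auto
  ultimately show ?thesis
    using that unfolding row_circuits_def by blast
qed

lemma row_circuits_glue_relation_supp:
  assumes fin: "finite (E1 \<union> E2)" and int: "E1 \<inter> E2 = {e}"
    and meet: "spans_meet_in_line r E1 E2 e"
    and C1: "C1 \<in> row_circuits r E1" "e \<in> C1" and C2: "C2 \<in> row_circuits r E2" "e \<in> C2"
    and g: "supp g \<subseteq> (C1 \<union> C2) - {e}" "supp g \<noteq> {}" "\<forall>col. lincomb r (E1 \<union> E2) g col = 0"
  shows "supp g = (C1 \<union> C2) - {e}"
proof -
  let ?U = "E1 \<union> E2"
  have C1U: "row_circuit r C1" "C1 \<subseteq> ?U" and C2U: "row_circuit r C2" "C2 \<subseteq> ?U"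
    and C12: "C1 \<subseteq> E1" "C2 \<subseteq> E2"
    using C1(1) C2(1) by (auto simp: row_circuits_def)
  define a where "a = (\<lambda>f. if f \<in> E1 then g f else 0)"
  define b where "b = (\<lambda>f. if f \<in> E1 then 0 else g f)"
  obtain l where la: "\<forall>col. lincomb r ?U a col = l * r e col"
    and lb: "\<forall>col. lincomb r ?U b col = - l * r e col"
    using relation_split_along_line[OF meet _ g(3)] g(1) C1U(2) C2U(2) unfolding a_def b_def by blast
  have "supp a \<subseteq> C1 - {e}" "supp b \<subseteq> C2 - {e}"
    using g(1) C12 int unfolding a_def b_def supp_def by auto
  then have "supp a = (if l = 0 then {} else C1 - {e})"
    and "supp b = (if l = 0 then {} else C2 - {e})"
    using row_circuit_lincomb_eq_multiple[OF fin C1U C1(2) _ la]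
      row_circuit_lincomb_eq_multiple[OF fin C2U C2(2) _ lb] by auto
  moreover have "supp g = supp a \<union> supp b"
    by (auto simp: a_def b_def supp_def)
  ultimately show ?thesis
    using g(2) by (auto split: if_splits)
qed

lemma row_circuit_glue:
  assumes fin: "finite (E1 \<union> E2)" and int: "E1 \<inter> E2 = {e}"
    and meet: "spans_meet_in_line r E1 E2 e" and "r e col0 \<noteq> 0"
    and C1: "C1 \<in> row_circuits r E1" "e \<in> C1" and C2: "C2 \<in> row_circuits r E2" "e \<in> C2"
  shows "row_circuit r ((C1 \<union> C2) - {e})"
proof -
  let ?U = "E1 \<union> E2" and ?C = "(C1 \<union> C2) - {e}"
  have C1U: "row_circuit r C1" "C1 \<subseteq> ?U" and C2U: "row_circuit r C2" "C2 \<subseteq> ?U"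
    and C12: "C1 \<subseteq> E1" "C2 \<subseteq> E2"
    using C1(1) C2(1) by (auto simp: row_circuits_def)
  obtain a1 where a1: "supp a1 = C1 - {e}" "\<forall>col. lincomb r ?U a1 col = r e col"
    using row_circuit_relation_through[OF fin C1U C1(2)] .
  obtain a2 where a2: "supp a2 = C2 - {e}" "\<forall>col. lincomb r ?U a2 col = r e col"
    using row_circuit_relation_through[OF fin C2U C2(2)] .
  have "supp a1 \<inter> supp a2 = {}"
    using a1(1) a2(1) C12 int by blast
  then have "supp (\<lambda>f. a1 f - a2 f) = supp a1 \<union> supp a2"
    by (rule supp_diff_disjoint)
  then have supp_diff: "supp (\<lambda>f. a1 f - a2 f) = ?C"
    using a1(1) a2(1) by auto
  have "supp a1 \<noteq> {}"
  proof
    assume "supp a1 = {}"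
    then have "lincomb r ?U a1 col0 = 0"
      by (intro lincomb_eq_0_if_rows_vanish) simp
    then show False
      using a1(2) \<open>r e col0 \<noteq> 0\<close> by simp
  qed
  then have "?C \<noteq> {}"
    using a1(1) by blast
  moreover have "?C \<subseteq> ?U"
    using C1U C2U by blast
  moreover have "\<forall>col. lincomb r ?U (\<lambda>f. a1 f - a2 f) col = 0"
    using a1(2) a2(2) by (simp add: lincomb_diff)
  ultimately show ?thesis
    using row_circuitI[OF fin _ supp_diff] row_circuits_glue_relation_supp[OF fin int meet C1 C2]
    by blast
qed

lemma row_circuits_parallel_connection:
  assumes "finite (E1 \<union> E2)" "E1 \<inter> E2 = {e}" "spans_meet_in_line r E1 E2 e" "r e col0 \<noteq> 0"
  shows "row_circuits r (E1 \<union> E2) = par_conn_circuits (row_circuits r E1) (row_circuits r E2) e"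
proof
  show "row_circuits r (E1 \<union> E2) \<subseteq> par_conn_circuits (row_circuits r E1) (row_circuits r E2) e"
  proof
    fix C assume "C \<in> row_circuits r (E1 \<union> E2)"
    then have C: "row_circuit r C" "C \<subseteq> E1 \<union> E2"
      by (auto simp: row_circuits_def)
    show "C \<in> par_conn_circuits (row_circuits r E1) (row_circuits r E2) e"
    proof (cases "C \<subseteq> E1 \<or> C \<subseteq> E2")
      case True
      then show ?thesis
        using C by (auto simp: par_conn_circuits_def row_circuits_def)
    next
      case False
      then have "\<not> C \<subseteq> E1" "\<not> C \<subseteq> E2"
        by auto
      then obtain C1 C2 where "C = (C1 \<union> C2) - {e}"
        and "C1 \<in> row_circuits r E1" "e \<in> C1" "C2 \<in> row_circuits r E2" "e \<in> C2"
        using row_circuit_union_decompose[OF assms(1-3) C] by blast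
      then show ?thesis
        unfolding par_conn_circuits_def by blast
    qed
  qed
  show "par_conn_circuits (row_circuits r E1) (row_circuits r E2) e \<subseteq> row_circuits r (E1 \<union> E2)"
    using row_circuit_glue[OF assms] by (fastforce simp: par_conn_circuits_def row_circuits_def)
qed

lemma two_sum_circuits_eq_par_conn_avoiding:
  "two_sum_circuits \<C>1 \<C>2 x = {C \<in> par_conn_circuits \<C>1 \<C>2 x. x \<notin> C}"
  unfolding two_sum_circuits_def par_conn_circuits_def by auto

section \<open>Rigidity matrix rows and trivial motions\<close>

lemma rig_row_pair:
  assumes "u \<noteq> v"
  shows "rig_row d p {u, v} (w, k) =
    (if k < d \<and> w = u then p u k - p v k else if k < d \<and> w = v then p v k - p u k else 0)"
proof -
  have "(THE x. x \<in> {u, v} \<and> x \<noteq> u) = v" "(THE x. x \<in> {u, v} \<and> x \<noteq> v) = u"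
    using assms by (auto intro: the_equality)
  then show ?thesis
    using assms by (auto simp: rig_row_def)
qed

lemma rig_row_eq_0: "w \<notin> f \<or> \<not> k < d \<Longrightarrow> rig_row d p f (w, k) = 0"
  by (auto simp: rig_row_def)

definition col_pairing :: "nat \<Rightarrow> 'v set \<Rightarrow> ('v \<times> nat \<Rightarrow> real) \<Rightarrow> ('v \<Rightarrow> nat \<Rightarrow> real) \<Rightarrow> real"
  where "col_pairing d V w m = (\<Sum>v\<in>V. \<Sum>i<d. w (v, i) * m v i)"

definition infinitesimal_isometry :: "nat \<Rightarrow> ('v \<Rightarrow> nat \<Rightarrow> real) \<Rightarrow> ('v \<Rightarrow> nat \<Rightarrow> real) \<Rightarrow> bool"
  where "infinitesimal_isometry d p m \<longleftrightarrow>
           (\<forall>u v. (\<Sum>i<d. (p u i - p v i) * (m u i - m v i)) = 0)"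

lemma translation_infinitesimal_isometry: "infinitesimal_isometry d p (\<lambda>v i. t i)"
  by (simp add: infinitesimal_isometry_def)

lemma rotation_infinitesimal_isometry:
  assumes "j < d" "k < d" "j \<noteq> k"
  shows "infinitesimal_isometry d p (\<lambda>v i. if i = j then p v k else if i = k then - p v j else 0)"
  unfolding infinitesimal_isometry_def
proof (intro allI)
  fix u v
  let ?x = "\<lambda>i. p u i - p v i"
  have "(\<Sum>i<d. ?x i * ((if i = j then p u k else if i = k then - p u j else 0)
                        - (if i = j then p v k else if i = k then - p v j else 0)))
      = (\<Sum>i<d. (if i = j then ?x j * ?x k else 0) + (if i = k then - (?x k * ?x j) else 0))"
    using assms(3) by (intro sum.cong) (auto simp: algebra_simps)
  also have "\<dots> = 0"
    using assms by (simp add: sum.distrib)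
  finally show "(\<Sum>i<d. ?x i * ((if i = j then p u k else if i = k then - p u j else 0)
                        - (if i = j then p v k else if i = k then - p v j else 0))) = 0" .
qed

lemma col_pairing_two_vertices:
  assumes "finite V" "a \<in> V" "b \<in> V" "a \<noteq> b" "\<And>v i. v \<notin> {a, b} \<Longrightarrow> w (v, i) = 0"
  shows "col_pairing d V w m = (\<Sum>i<d. w (a, i) * m a i) + (\<Sum>i<d. w (b, i) * m b i)"
proof -
  have "col_pairing d V w m = (\<Sum>v\<in>{a, b}. \<Sum>i<d. w (v, i) * m v i)"
    unfolding col_pairing_def by (rule sum.mono_neutral_right) (use assms in auto)
  then show ?thesis
    using assms(4) by simp
qed

lemma col_pairing_rig_row:
  assumes "finite V" "u \<in> V" "v \<in> V" "u \<noteq> v"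
  shows "col_pairing d V (rig_row d p {u, v}) m = (\<Sum>i<d. (p u i - p v i) * (m u i - m v i))"
proof -
  have "col_pairing d V (rig_row d p {u, v}) m
      = (\<Sum>i<d. rig_row d p {u, v} (u, i) * m u i) + (\<Sum>i<d. rig_row d p {u, v} (v, i) * m v i)"
    by (rule col_pairing_two_vertices[OF assms]) (simp add: rig_row_eq_0)
  also have "\<dots> = (\<Sum>i<d. (p u i - p v i) * m u i) + (\<Sum>i<d. (p v i - p u i) * m v i)"
    using assms(4) by (intro arg_cong2[where f = "(+)"] sum.cong) (auto simp: rig_row_pair)
  also have "\<dots> = (\<Sum>i<d. (p u i - p v i) * (m u i - m v i))"
    by (simp add: sum.distrib[symmetric] algebra_simps)
  finally show ?thesis .
qed

lemma col_pairing_lincomb: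
  "col_pairing d V (lincomb r U c) m = (\<Sum>f\<in>U. c f * col_pairing d V (r f) m)"
proof -
  have "col_pairing d V (lincomb r U c) m = (\<Sum>v\<in>V. \<Sum>i<d. \<Sum>f\<in>U. c f * (r f (v, i) * m v i))"
    unfolding col_pairing_def lincomb_def by (simp add: sum_distrib_right mult.assoc)
  also have "\<dots> = (\<Sum>v\<in>V. \<Sum>f\<in>U. \<Sum>i<d. c f * (r f (v, i) * m v i))"
    by (rule sum.cong[OF refl], rule sum.swap)
  also have "\<dots> = (\<Sum>f\<in>U. \<Sum>v\<in>V. \<Sum>i<d. c f * (r f (v, i) * m v i))"
    by (rule sum.swap)
  also have "\<dots> = (\<Sum>f\<in>U. c f * col_pairing d V (r f) m)"
    unfolding col_pairing_def by (simp add: sum_distrib_left)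
  finally show ?thesis .
qed

lemma col_pairing_lincomb_rig_row_eq_0:
  assumes "finite V" "\<forall>f\<in>U. f \<subseteq> V \<and> card f = 2" "infinitesimal_isometry d p m"
  shows "col_pairing d V (lincomb (rig_row d p) U c) m = 0"
proof -
  have "col_pairing d V (rig_row d p f) m = 0" if "f \<in> U" for f
  proof -
    have "card f = 2"
      using assms(2) that by blast
    then obtain u v where uv: "f = {u, v}" "u \<noteq> v"
      by (meson card_2_iff)
    then have "u \<in> V" "v \<in> V"
      using assms(2) that by auto
    then have "col_pairing d V (rig_row d p f) m = (\<Sum>i<d. (p u i - p v i) * (m u i - m v i))"
      using col_pairing_rig_row[OF assms(1) _ _ uv(2)] uv(1) by simp
    also have "\<dots> = 0"
      using assms(3) unfolding infinitesimal_isometry_def by blast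
    finally show ?thesis .
  qed
  then show ?thesis
    unfolding col_pairing_lincomb by simp
qed

lemma lincomb_rig_row_outside:
  assumes "simple_graph V E" "supp c \<subseteq> E" "v \<notin> V \<or> \<not> k < d"
  shows "lincomb (rig_row d p) U c (v, k) = 0"
proof (rule lincomb_eq_0_if_rows_vanish)
  fix f assume "f \<in> supp c"
  then have "f \<subseteq> V"
    using assms(1,2) by (auto simp: simple_graph_def)
  then show "rig_row d p f (v, k) = 0"
    using assms(3) by (auto intro: rig_row_eq_0)
qed

lemma two_vertex_annihilator_coords:
  assumes "0 < d" "k < d"
    and motion: "\<And>m. infinitesimal_isometry d p m \<Longrightarrow>
                   (\<Sum>i<d. w (a, i) * m a i) + (\<Sum>i<d. w (b, i) * m b i) = 0"
  shows "w (b, k) = - w (a, k)"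
    and "w (a, k) * (p a 0 - p b 0) = w (a, 0) * (p a k - p b k)"
proof -
  have transl: "w (b, j) = - w (a, j)" if "j < d" for j
    using motion[OF translation_infinitesimal_isometry[of d p "\<lambda>i. if i = j then 1 else 0"]] that
    by (simp add: if_distrib[of "\<lambda>z. _ * z"] eq_neg_iff_add_eq_0 cong: if_cong)
  then show "w (b, k) = - w (a, k)"
    using assms(2) .
  show "w (a, k) * (p a 0 - p b 0) = w (a, 0) * (p a k - p b k)"
  proof (cases "k = 0")
    case False
    have "(\<Sum>i<d. w (a, i) * (if i = k then p a 0 else if i = 0 then - p a k else 0))
        + (\<Sum>i<d. w (b, i) * (if i = k then p b 0 else if i = 0 then - p b k else 0)) = 0"
      using motion[OF rotation_infinitesimal_isometry[OF assms(2,1) False]] .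
    then have "w (a, k) * p a 0 - w (a, 0) * p a k + (w (b, k) * p b 0 - w (b, 0) * p b k) = 0"
      using False assms(1,2) by (simp add: if_distrib[of "\<lambda>z. _ * z"] sum.If_cases cong: if_cong)
    then show ?thesis
      using transl[OF assms(2)] transl[OF assms(1)] by (simp add: algebra_simps)
  qed simp
qed

lemma two_vertex_annihilator_eq_multiple_rig_row:
  assumes "a \<noteq> b" "p a 0 \<noteq> p b 0" "0 < d"
    and outside: "\<And>v k. v \<notin> {a, b} \<or> \<not> k < d \<Longrightarrow> w (v, k) = 0"
    and motion: "\<And>m. infinitesimal_isometry d p m \<Longrightarrow>
                   (\<Sum>i<d. w (a, i) * m a i) + (\<Sum>i<d. w (b, i) * m b i) = 0"
  shows "\<exists>l. \<forall>col. w col = l * rig_row d p {a, b} col"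
proof -
  define l where "l = w (a, 0) / (p a 0 - p b 0)"
  have "w (v, k) = l * rig_row d p {a, b} (v, k)" for v k
  proof (cases "v \<in> {a, b} \<and> k < d")
    case True
    then have "w (a, k) = l * (p a k - p b k)"
      using two_vertex_annihilator_coords(2)[OF assms(3) _ motion] assms(2)
      by (simp add: l_def field_simps)
    then show ?thesis
      using True two_vertex_annihilator_coords(1)[OF assms(3) _ motion] assms(1)
      by (auto simp: rig_row_pair algebra_simps)
  next
    case False
    then show ?thesis
      using outside by (auto simp: rig_row_eq_0)
  qed
  then show ?thesis
    by auto
qed

lemma rig_rows_spans_meet_in_line:
  fixes V1 V2 :: "'v set"
  assumes G1: "simple_graph V1 E1" and G2: "simple_graph V2 E2"
    and ab: "V1 \<inter> V2 = {a, b}" "a \<noteq> b" and "p a 0 \<noteq> p b 0" and "0 < d"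
  shows "spans_meet_in_line (rig_row d p) E1 E2 {a, b}"
  unfolding spans_meet_in_line_def
proof (intro allI impI)
  fix x y :: "'v set \<Rightarrow> real"
  assume sx: "supp x \<subseteq> E1" and sy: "supp y \<subseteq> E2"
    and xy: "\<forall>col. lincomb (rig_row d p) (E1 \<union> E2) x col = lincomb (rig_row d p) (E1 \<union> E2) y col"
  let ?V = "V1 \<union> V2"
  define w where "w = lincomb (rig_row d p) (E1 \<union> E2) x"
  have fin: "finite ?V"
    using G1 G2 by (simp add: simple_graph_def)
  have abV: "a \<in> ?V" "b \<in> ?V"
    using ab by auto
  have outside: "w (v, k) = 0" if "v \<notin> {a, b} \<or> \<not> k < d" for v k
  proof -
    have "v \<notin> V1 \<or> v \<notin> V2 \<or> \<not> k < d"
      using that ab(1) by blast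
    then show ?thesis
      using lincomb_rig_row_outside[OF G1 sx] lincomb_rig_row_outside[OF G2 sy] xy
      unfolding w_def by metis
  qed
  have "(\<Sum>i<d. w (a, i) * m a i) + (\<Sum>i<d. w (b, i) * m b i) = 0"
    if "infinitesimal_isometry d p m" for m
  proof -
    have "\<forall>f\<in>E1 \<union> E2. f \<subseteq> ?V \<and> card f = 2"
      using G1 G2 by (auto simp: simple_graph_def)
    then have "col_pairing d ?V w m = 0"
      unfolding w_def using col_pairing_lincomb_rig_row_eq_0[OF fin _ that] by blast
    then show ?thesis
      using col_pairing_two_vertices[OF fin abV ab(2)] outside by simp
  qed
  then show "\<exists>l. \<forall>col. lincomb (rig_row d p) (E1 \<union> E2) x col = l * rig_row d p {a, b} col"
    using two_vertex_annihilator_eq_multiple_rig_row[where p = p and w = w,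
        OF ab(2) \<open>p a 0 \<noteq> p b 0\<close> \<open>0 < d\<close> outside]
    unfolding w_def by blast
qed

section \<open>Genericity\<close>

lemma alg_indep_rat_inj_on:
  assumes indep: "alg_indep_rat X x" and "finite X"
  shows "inj_on x X"
proof (rule inj_onI, rule ccontr)
  fix s t assume st: "s \<in> X" "t \<in> X" "x s = x t" "s \<noteq> t"
  define var :: "'a \<Rightarrow> 'a \<Rightarrow> nat" where "var z = (\<lambda>y. if y = z then 1 else 0)" for z
  define c :: "('a \<Rightarrow> nat) \<Rightarrow> rat" where "c m = (if m = var s then 1 else - 1)" for m
  have eval_var: "(\<Prod>y\<in>X. x y ^ var z y) = x z" if "z \<in> X" for z
  proof -
    have "(\<Prod>y\<in>X. x y ^ var z y) = (\<Prod>y\<in>X. if y = z then x y else 1)"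
      by (rule prod.cong) (auto simp: var_def)
    then show ?thesis
      using \<open>finite X\<close> that by simp
  qed
  have "var s s \<noteq> var t s"
    using st(4) by (simp add: var_def)
  then have "var s \<noteq> var t"
    by metis
  have "(\<Sum>m\<in>{var s, var t}. of_rat (c m) * (\<Prod>y\<in>X. x y ^ m y))
      = of_rat (c (var s)) * x s + of_rat (c (var t)) * x t"
    using \<open>var s \<noteq> var t\<close> eval_var st(1,2) by simp
  also have "\<dots> = 0"
    using \<open>var s \<noteq> var t\<close> st(3) by (simp add: c_def)
  finally have "(\<Sum>m\<in>{var s, var t}. of_rat (c m) * (\<Prod>y\<in>X. x y ^ m y)) = 0" .
  moreover have "\<forall>m\<in>{var s, var t}. \<forall>y. m y \<noteq> 0 \<longrightarrow> y \<in> X"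
    using st(1,2) by (auto simp: var_def)
  ultimately have "c (var s) = 0"
    using indep[unfolded alg_indep_rat_def, rule_format, of "{var s, var t}" c "var s"] by blast
  then show False
    by (simp add: c_def)
qed

lemma generic_coords_distinct:
  assumes "generic d V p" "finite V" "u \<in> V" "v \<in> V" "u \<noteq> v" "i < d"
  shows "p u i \<noteq> p v i"
proof -
  have "inj_on (\<lambda>(v, i). p v i) (V \<times> {..<d})"
    using assms(1,2) alg_indep_rat_inj_on unfolding generic_def by blast
  show ?thesis
  proof
    assume "p u i = p v i"
    then have "(u, i) = (v, i)"
      using inj_onD[OF \<open>inj_on _ _\<close>, of "(u, i)" "(v, i)"] assms(3,4,6) by auto
    then show False
      using assms(5) by simp
  qed
qed

lemma simple_graph_finite_edges:
  assumes "simple_graph V E"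
  shows "finite E"
proof -
  have "E \<subseteq> Pow V" "finite V"
    using assms by (auto simp: simple_graph_def)
  then show ?thesis
    using finite_subset[of E "Pow V"] by simp
qed

theorem theorem3p3:
  fixes V1 V2 :: "'v set" and E1 E2 :: "'v set set" and e :: "'v set"
    and d :: nat and p :: "'v \<Rightarrow> nat \<Rightarrow> real"
  assumes "d \<ge> 1"
    and "simple_graph V1 E1" and "simple_graph V2 E2"
    and "card (V1 \<inter> V2) = 2" and "e = V1 \<inter> V2"
    and "E1 \<inter> E2 = {e}"
    and "generic d (V1 \<union> V2) p"
    and "\<not> is_coloop (rig_circuits d p E1) e"
    and "\<not> is_coloop (rig_circuits d p E2) e"
  shows "rig_circuits d p (E1 \<union> E2)
           = par_conn_circuits (rig_circuits d p E1) (rig_circuits d p E2) e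
       \<and> rig_circuits d p ((E1 \<union> E2) - {e})
           = two_sum_circuits (rig_circuits d p E1) (rig_circuits d p E2) e"
proof -
  obtain a b where ab: "V1 \<inter> V2 = {a, b}" "a \<noteq> b"
    using assms(4) card_2_iff by metis
  have fin_V: "finite (V1 \<union> V2)"
    using assms(2,3) by (simp add: simple_graph_def)
  have fin_E: "finite (E1 \<union> E2)"
    using simple_graph_finite_edges[OF assms(2)] simple_graph_finite_edges[OF assms(3)] by simp
  have "a \<in> V1 \<union> V2" "b \<in> V1 \<union> V2"
    using ab(1) by auto
  then have "p a 0 \<noteq> p b 0"
    using generic_coords_distinct[OF assms(7) fin_V _ _ ab(2)] assms(1) by simp
  have "rig_row d p e (a, 0) \<noteq> 0"
    using \<open>p a 0 \<noteq> p b 0\<close> ab assms(1,5) by (simp add: rig_row_pair)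
  moreover have "spans_meet_in_line (rig_row d p) E1 E2 e"
    using rig_rows_spans_meet_in_line[where p = p, OF assms(2,3) ab \<open>p a 0 \<noteq> p b 0\<close>]
      assms(1,5) ab(1)
    by simp
  ultimately have "row_circuits (rig_row d p) (E1 \<union> E2)
      = par_conn_circuits (row_circuits (rig_row d p) E1) (row_circuits (rig_row d p) E2) e"
    by (rule row_circuits_parallel_connection[OF fin_E assms(6), rotated])
  then show ?thesis
    unfolding rig_circuits_eq_row_circuits row_circuits_Diff_singleton
      two_sum_circuits_eq_par_conn_avoiding by simp
qed

end
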